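(* Let $G$ and $H$ be finite abelian groups, written additively, of the same even order $k$, and let $f:G\to H$ be semi-planar. Suppose $S(G,H;f)$ splits into two substructures $S_1$ and $S_2$ with $\mathcal{L}(0,0)\in S_1$, and let $B=\{b\in H : \mathcal{L}(0,b)\in S_1\}$ (a subgroup of $H$ of index $2$). Then for any $h\in H\setminus B$, the mapping $\phi_h:G\times H\to G\times H$, $\phi_h(x,y)=(x,y+h)$ (together with the induced map on lines $\mathcal{L}(a,b)\mapsto\mathcal{L}(a,b+h)$), is an isomorphism between the two substructures $S_1$ and $S_2$.
   Context: A function $f:G\to H$ is semi-planar if for every non-identity $a\in G$ and every $y\in H$, the equation $f(x+a)-f(x)=y$ has either $0$ or $2$ solutions $x\in G$. The incidence structure $S(G,H;f)$ has points $(x,y)\in G\times H$ and lines $\mathcal{L}(a,b)$ for $(a,b)\in G\times H$, with $(x,y)$ incident with $\mathcal{L}(a,b)$ iff $y=f(x-a)+b$. Its incidence graph is the bipartite graph on points and lines with an edge for each incident pair. $S(G,H;f)$ splits into two substructures $S_1,S_2$ if its incidence graph has exactly two connected components; $S_1,S_2$ are the incidence structures formed by the points and lines of the two components, and $\mathcal{L}(a,b)\in S_i$ means the line lies in component $S_i$. *)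

theory Defs
  imports Main
begin

definition semi_planar :: "('g::{ab_group_add,finite} \<Rightarrow> 'h::ab_group_add) \<Rightarrow> bool" where
  "semi_planar f \<longleftrightarrow>
     (\<forall>a. a \<noteq> 0 \<longrightarrow> (\<forall>y. card {x. f (x + a) - f x = y} \<in> {0, 2}))"

text \<open>Points and lines of S(G,H;f) are both indexed by G \<times> H; the line (a,b) is L(a,b).
  Point (x,y) is incident with L(a,b) iff y = f(x - a) + b.\<close>

definition incident :: "('g::ab_group_add \<Rightarrow> 'h::ab_group_add) \<Rightarrow> 'g \<times> 'h \<Rightarrow> 'g \<times> 'h \<Rightarrow> bool" where
  "incident f p l \<longleftrightarrow> snd p = f (fst p - fst l) + snd l"

text \<open>Vertices of the incidence graph: Inl p is a point, Inr l is a line.\<close>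

type_synonym ('g, 'h) vertex = "('g \<times> 'h) + ('g \<times> 'h)"

definition inc_edges :: "('g::ab_group_add \<Rightarrow> 'h::ab_group_add) \<Rightarrow> (('g,'h) vertex \<times> ('g,'h) vertex) set" where
  "inc_edges f = {(u, v). \<exists>p l. incident f p l \<and>
       ((u = Inl p \<and> v = Inr l) \<or> (u = Inr l \<and> v = Inl p))}"

definition connected_in :: "('g::ab_group_add \<Rightarrow> 'h::ab_group_add) \<Rightarrow> (('g,'h) vertex \<times> ('g,'h) vertex) set" where
  "connected_in f = (inc_edges f)\<^sup>*"

definition components :: "('g::ab_group_add \<Rightarrow> 'h::ab_group_add) \<Rightarrow> ('g,'h) vertex set set" where
  "components f = UNIV // connected_in f"

definition component_of :: "('g::ab_group_add \<Rightarrow> 'h::ab_group_add) \<Rightarrow> ('g,'h) vertex \<Rightarrow> ('g,'h) vertex set" where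
  "component_of f v = connected_in f `` {v}"

text \<open>S(G,H;f) splits into two substructures: the incidence graph has exactly two components.\<close>

definition splits_in_two :: "('g::{ab_group_add,finite} \<Rightarrow> 'h::{ab_group_add,finite}) \<Rightarrow> bool" where
  "splits_in_two f \<longleftrightarrow> card (components f) = 2"

definition shift_vertex :: "'h::ab_group_add \<Rightarrow> ('g,'h) vertex \<Rightarrow> ('g,'h) vertex" where
  "shift_vertex h v = (case v of Inl (x, y) \<Rightarrow> Inl (x, y + h) | Inr (a, b) \<Rightarrow> Inr (a, b + h))"

end

theory Submission
  imports Defs
begin

text \<open>Translating the second coordinate of points and lines by the same h preserves incidence,
  so it is an automorphism of the incidence graph and permutes its components. It moves
  L(0,0) to L(0,h), which lies outside S1; with only two components, S1 is therefore mapped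
  onto the other one. Semi-planarity and the order of the groups are only needed for B to be a
  subgroup of index 2; the isomorphism itself does not use them.\<close>

lemma shift_vertex_shift_vertex: "shift_vertex a (shift_vertex b v) = shift_vertex (b + a) v"
  by (cases v) (auto simp: shift_vertex_def add.assoc)

lemma shift_vertex_0 [simp]: "shift_vertex 0 v = v"
  by (cases v) (auto simp: shift_vertex_def)

lemma shift_vertex_neg_cancel [simp]:
  "shift_vertex h (shift_vertex (- h) v) = v" "shift_vertex (- h) (shift_vertex h v) = v"
  by (simp_all add: shift_vertex_shift_vertex)

lemma inj_shift_vertex: "inj (shift_vertex h)"
  by (metis injI shift_vertex_neg_cancel(2))

lemma incident_shift_iff: "incident f (x, y + h) (a, b + h) \<longleftrightarrow> incident f (x, y) (a, b)"
  by (auto simp: incident_def)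

lemma shift_vertex_in_inc_edges:
  assumes "(u, v) \<in> inc_edges f"
  shows "(shift_vertex h u, shift_vertex h v) \<in> inc_edges f"
proof -
  from assms obtain x y a b where "incident f (x, y) (a, b)"
    and "(u = Inl (x, y) \<and> v = Inr (a, b)) \<or> (u = Inr (a, b) \<and> v = Inl (x, y))"
    unfolding inc_edges_def by auto
  then show ?thesis
    using incident_shift_iff[of f x y h a b] unfolding inc_edges_def shift_vertex_def by auto
qed

lemma shift_vertex_in_connected_in:
  assumes "(u, v) \<in> connected_in f"
  shows "(shift_vertex h u, shift_vertex h v) \<in> connected_in f"
  using assms unfolding connected_in_def
proof (induction rule: rtrancl_induct)
  case base
  then show ?case by simp
next
  case (step v w)
  then show ?case by (meson rtrancl_into_rtrancl shift_vertex_in_inc_edges)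
qed

lemma component_of_shift_vertex:
  "component_of f (shift_vertex h v) = shift_vertex h ` component_of f v"
proof
  show "shift_vertex h ` component_of f v \<subseteq> component_of f (shift_vertex h v)"
    unfolding component_of_def using shift_vertex_in_connected_in by fastforce
next
  show "component_of f (shift_vertex h v) \<subseteq> shift_vertex h ` component_of f v"
  proof
    fix w assume "w \<in> component_of f (shift_vertex h v)"
    then have "(v, shift_vertex (- h) w) \<in> connected_in f"
      using shift_vertex_in_connected_in[of "shift_vertex h v" w f "- h"]
      unfolding component_of_def by simp
    then show "w \<in> shift_vertex h ` component_of f v"
      unfolding component_of_def by (metis Image_singleton_iff image_eqI shift_vertex_neg_cancel(1))
  qed
qed

lemma equiv_connected_in: "equiv UNIV (connected_in f)"
proof -
  have "sym (inc_edges f)"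
    unfolding sym_def inc_edges_def by blast
  then show ?thesis
    unfolding connected_in_def equiv_def by (simp add: sym_rtrancl refl_rtrancl trans_rtrancl)
qed

lemma component_of_in_components: "component_of f v \<in> components f"
  unfolding components_def component_of_def by (rule quotientI) simp

lemma component_of_self: "v \<in> component_of f v"
  unfolding component_of_def connected_in_def by simp

lemma quotient_card_2_other_class:
  assumes "equiv A r" and "card (A // r) = 2"
    and "X \<in> A // r" and "Y \<in> A // r" and "X \<noteq> Y"
  shows "Y = A - X"
proof -
  have "A // r = {X, Y}"
    using assms(2-5) by (metis card_2_iff doubleton_eq_iff insertE singletonD)
  then have "A = X \<union> Y"
    using Union_quotient[OF assms(1)] by simp
  moreover have "X \<inter> Y = {}"
    using quotient_disj[OF assms(1,3,4)] assms(5) by blast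
  ultimately show ?thesis by blast
qed

theorem corollary1:
  fixes f :: "'g::{ab_group_add,finite} \<Rightarrow> 'h::{ab_group_add,finite}"
    and h :: 'h
  assumes "card (UNIV :: 'g set) = card (UNIV :: 'h set)"
    and "even (card (UNIV :: 'g set))"
    and "semi_planar f"
    and "splits_in_two f"
    and "h \<notin> {b. Inr (0, b) \<in> component_of f (Inr (0, 0))}"
  shows "let S1 = component_of f (Inr (0, 0)); S2 = UNIV - S1 in
           S2 \<in> components f \<and>
           bij_betw (shift_vertex h) S1 S2 \<and>
           (\<forall>p l. Inl p \<in> S1 \<longrightarrow> Inr l \<in> S1 \<longrightarrow>
              (incident f p l \<longleftrightarrow> incident f (fst p, snd p + h) (fst l, snd l + h)))"
proof -
  define S1 where "S1 = component_of f (Inr (0, 0))"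
  have image_S1: "shift_vertex h ` S1 = component_of f (Inr (0, h))"
    using component_of_shift_vertex[of f h "Inr (0, 0)"]
    unfolding S1_def by (simp add: shift_vertex_def)
  have "component_of f (Inr (0, h)) \<noteq> S1"
    using assms(5) component_of_self[of "Inr (0, h)" f] unfolding S1_def by auto
  then have other_component: "component_of f (Inr (0, h)) = UNIV - S1"
    using quotient_card_2_other_class[OF equiv_connected_in] assms(4) component_of_in_components
    unfolding splits_in_two_def components_def S1_def by metis
  have "bij_betw (shift_vertex h) S1 (UNIV - S1)"
    using image_S1 other_component inj_shift_vertex by (metis bij_betw_imageI inj_on_subset subset_UNIV)
  then show ?thesis
    using other_component component_of_in_components[of f "Inr (0, h)"]
    unfolding Let_def S1_def[symmetric] by (simp add: incident_def)
qed

end
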